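(* Let $\Gamma=\mathrm{SL}_2(\mathbb Z)$, $\Gamma_i=\langle\gamma_i\rangle$ with $\gamma_i=\begin{pmatrix}0&1\\-1&0\end{pmatrix}$, $\nu_{\mathbb H}\begin{pmatrix}a&b\\c&d\end{pmatrix}=a^2+b^2+c^2+d^2$, and for $\gamma=\begin{pmatrix}a&b\\c&d\end{pmatrix}$ let $z_1(\gamma)=(a+d)+i(b-c)$, $z_2(\gamma)=(a-d)-i(b+c)$. Let $n\ge2$ with $n\equiv3\bmod4$ and $$C_n=\{z_1\in\mathbb Z[i]: N(z_1)=n+2,\ z_1\text{ primary}\}\times\{z_2\in\mathbb Z[i]: N(z_2)=n-2,\ z_2\text{ primary}\}.$$ Then there exist unique representatives of the double cosets in $\Gamma_i\backslash\Gamma/\Gamma_i$ with $\nu_{\mathbb H}(\gamma)=n$ such that the map $\gamma\mapsto(z_1(\gamma),z_2(\gamma))$ from this set of representatives to $C_n$ is a bijection.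
   Context: $N(z)=z\bar z$; a Gaussian integer $w$ is primary if $w\equiv1\bmod(1+i)^3$. $\nu_{\mathbb H}$ is constant on double cosets $\Gamma_i\gamma\Gamma_i$. *)

theory Defs
  imports Complex_Main
begin

text \<open>2x2 integer matrices (a b; c d) represented as tuples (a, b, c, d).\<close>
type_synonym imat = "int \<times> int \<times> int \<times> int"

fun mmul :: "imat \<Rightarrow> imat \<Rightarrow> imat" where
  "mmul (a, b, c, d) (e, f, g, h) = (a*e + b*g, a*f + b*h, c*e + d*g, c*f + d*h)"

definition mone :: imat where "mone = (1, 0, 0, 1)"

fun mpow :: "imat \<Rightarrow> nat \<Rightarrow> imat" where
  "mpow m 0 = mone"
| "mpow m (Suc k) = mmul m (mpow m k)"

definition SL2Z :: "imat set" where
  "SL2Z = {(a, b, c, d). a*d - b*c = 1}"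

definition gamma_i :: imat where "gamma_i = (0, 1, -1, 0)"

text \<open>The cyclic subgroup generated by gamma_i (gamma_i has finite order 4).\<close>
definition Gamma_i :: "imat set" where
  "Gamma_i = {mpow gamma_i k | k. True}"

definition dcoset :: "imat \<Rightarrow> imat set" where
  "dcoset \<gamma> = {mmul (mmul g \<gamma>) h | g h. g \<in> Gamma_i \<and> h \<in> Gamma_i}"

fun nuH :: "imat \<Rightarrow> int" where
  "nuH (a, b, c, d) = a^2 + b^2 + c^2 + d^2"

definition gauss_ints :: "complex set" where
  "gauss_ints = {z. Re z \<in> \<int> \<and> Im z \<in> \<int>}"

definition gnorm :: "complex \<Rightarrow> complex" where
  "gnorm z = z * cnj z"

definition primary :: "complex \<Rightarrow> bool" where
  "primary w \<longleftrightarrow> (\<exists>q \<in> gauss_ints. w - 1 = q * (1 + \<i>) ^ 3)"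

fun z1 :: "imat \<Rightarrow> complex" where
  "z1 (a, b, c, d) = of_int (a + d) + \<i> * of_int (b - c)"

fun z2 :: "imat \<Rightarrow> complex" where
  "z2 (a, b, c, d) = of_int (a - d) - \<i> * of_int (b + c)"

definition Cn :: "int \<Rightarrow> (complex \<times> complex) set" where
  "Cn n = {w \<in> gauss_ints. gnorm w = of_int (n + 2) \<and> primary w}
        \<times> {w \<in> gauss_ints. gnorm w = of_int (n - 2) \<and> primary w}"

end

theory Submission
  imports Defs
begin

text \<open>
  The map \<gamma> \<mapsto> (z1 \<gamma>, z2 \<gamma>) is injective on integer matrices, and
  N(z1) = \<nu>(\<gamma>) + 2 det \<gamma>, N(z2) = \<nu>(\<gamma>) - 2 det \<gamma>; its image consists of the pairs of
  Gaussian integers congruent modulo 2. Multiplying \<gamma> by gamma_i on either side multiplies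
  z1 and z2 by units, so the double coset of \<gamma> corresponds to the pairs (u z1, \<plusminus>u z2)
  with u a unit. When \<nu>(\<gamma>) is odd, z1 has odd norm and hence exactly one primary associate
  u z1; since z2 \<equiv> z1 mod 2, u z2 is odd as well and exactly one of \<plusminus>u z2 is primary.
  So every double coset contains exactly one \<gamma> with z1 and z2 primary, and these \<gamma> are
  precisely the matrices mapped onto C_n.
\<close>

definition gauss_units :: "complex set" where
  "gauss_units = {1, \<i>, -1, -\<i>}"

lemma gauss_intsE:
  assumes "w \<in> gauss_ints"
  obtains x y :: int where "w = of_int x + \<i> * of_int y"
proof -
  from assms obtain x y where "Re w = of_int x" "Im w = of_int y"
    unfolding gauss_ints_def by (auto elim!: Ints_cases)
  then have "w = of_int x + \<i> * of_int y" by (simp add: complex_eq_iff)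
  then show ?thesis by (rule that)
qed

lemma gaussian_in_gauss_ints [simp]: "of_int x + \<i> * of_int y \<in> gauss_ints"
  by (simp add: gauss_ints_def)

lemma gaussian_eq_iff:
  "(of_int x + \<i> * of_int y :: complex) = of_int x' + \<i> * of_int y' \<longleftrightarrow> x = x' \<and> y = y'"
  by (simp add: complex_eq_iff)

lemma gauss_ints_mult: "z \<in> gauss_ints \<Longrightarrow> w \<in> gauss_ints \<Longrightarrow> z * w \<in> gauss_ints"
  by (auto simp: gauss_ints_def)

lemma gauss_units_subset: "gauss_units \<subseteq> gauss_ints"
  by (auto simp: gauss_units_def gauss_ints_def)

lemma gnorm_gaussian: "gnorm (of_int x + \<i> * of_int y) = of_int (x\<^sup>2 + y\<^sup>2)"
  by (simp add: gnorm_def complex_eq_iff power2_eq_square)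

lemma odd_mod_4_cases: "odd (z :: int) \<Longrightarrow> z mod 4 = 1 \<or> (- z) mod 4 = 1"
  by presburger

lemma mod_4_eq_1_imp_odd: "(z :: int) mod 4 = 1 \<Longrightarrow> odd z"
  by presburger

lemma uminus_mod_4_neq_1: "(z :: int) mod 4 = 1 \<Longrightarrow> (- z) mod 4 \<noteq> 1"
  by presburger

lemma primary_gaussian_iff:
  "primary (of_int x + \<i> * of_int y) \<longleftrightarrow> even y \<and> (x + y) mod 4 = 1"
proof
  assume "primary (of_int x + \<i> * of_int y)"
  then obtain q where "q \<in> gauss_ints"
    and q: "of_int x + \<i> * of_int y - 1 = q * (1 + \<i>) ^ 3"
    unfolding primary_def by blast
  from \<open>q \<in> gauss_ints\<close> obtain s t :: int where "q = of_int s + \<i> * of_int t"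
    by (rule gauss_intsE)
  with q have "x - 1 = -2*s - 2*t" "y = 2*s - 2*t"
    by (simp_all add: complex_eq_iff power3_eq_cube algebra_simps)
  then show "even y \<and> (x + y) mod 4 = 1" by presburger
next
  assume "even y \<and> (x + y) mod 4 = 1"
  then obtain k m where "y = 2*k" "x + y = 4*m + 1"
    by (metis evenE div_mod_decomp_int mult.commute)
  then have "of_int x + \<i> * of_int y - 1
      = (of_int (k - m) + \<i> * of_int (-m)) * (1 + \<i>) ^ 3"
    by (simp add: complex_eq_iff power3_eq_cube algebra_simps)
  then show "primary (of_int x + \<i> * of_int y)"
    unfolding primary_def using gaussian_in_gauss_ints by blast
qed

lemma primary_in_gauss_ints: "primary w \<Longrightarrow> w \<in> gauss_ints"
proof -
  assume "primary w"
  then obtain q where "q \<in> gauss_ints" and "w = 1 + q * (-2 + 2 * \<i>)"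
    unfolding primary_def by (auto simp: eq_diff_eq power3_eq_cube algebra_simps)
  then show "w \<in> gauss_ints" by (auto simp: gauss_ints_def)
qed

lemma primary_unit_mult_eq_1:
  assumes "primary w" "primary (u * w)" "u \<in> gauss_units"
  shows "u = 1"
proof -
  obtain x y :: int where w: "w = of_int x + \<i> * of_int y"
    using primary_in_gauss_ints[OF assms(1)] by (rule gauss_intsE)
  have "even y" and xy: "(x + y) mod 4 = 1"
    using assms(1) by (simp_all add: w primary_gaussian_iff)
  then have "odd x" using mod_4_eq_1_imp_odd by fastforce
  have "\<not> primary (of_int (-y) + \<i> * of_int x)" "\<not> primary (of_int y + \<i> * of_int (-x))"
    unfolding primary_gaussian_iff using \<open>odd x\<close> by simp_all
  moreover have "\<not> primary (of_int (-x) + \<i> * of_int (-y))"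
    unfolding primary_gaussian_iff using uminus_mod_4_neq_1[OF xy] by simp
  moreover have "\<i> * w = of_int (-y) + \<i> * of_int x" "-w = of_int (-x) + \<i> * of_int (-y)"
    "-\<i> * w = of_int y + \<i> * of_int (-x)"
    by (simp_all add: w complex_eq_iff)
  ultimately show "u = 1" using assms(2,3) by (auto simp: gauss_units_def)
qed

lemma primary_associate_unique:
  assumes "u \<in> gauss_units" "u' \<in> gauss_units" "primary (u * w)" "primary (u' * w)"
  shows "u * w = u' * w"
proof -
  have "u' * cnj u \<in> gauss_units" and "cnj u * u = 1"
    using assms(1,2) by (auto simp: gauss_units_def)
  then have "u' * w = (u' * cnj u) * (u * w)"
    by (metis mult.assoc mult.left_neutral)
  moreover from this have "u' * cnj u = 1"
    using assms(3,4) \<open>u' * cnj u \<in> gauss_units\<close> primary_unit_mult_eq_1 by metis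
  ultimately show ?thesis by (metis mult_1)
qed

lemma primary_associate_exists:
  assumes "odd (x + y)"
  shows "\<exists>u \<in> gauss_units. primary (u * (of_int x + \<i> * of_int y))"
proof -
  have "primary (of_int x + \<i> * of_int y) \<or> primary (of_int (-x) + \<i> * of_int (-y))
      \<or> primary (of_int (-y) + \<i> * of_int x) \<or> primary (of_int y + \<i> * of_int (-x))"
  proof (cases "even y")
    case True
    then show ?thesis unfolding primary_gaussian_iff using odd_mod_4_cases[OF assms] by auto
  next
    case False
    with assms have "even x" "odd (x - y)" by auto
    then show ?thesis unfolding primary_gaussian_iff using odd_mod_4_cases[of "x - y"] by auto
  qed
  moreover have "1 * (of_int x + \<i> * of_int y) = of_int x + \<i> * of_int y"
    "-1 * (of_int x + \<i> * of_int y) = of_int (-x) + \<i> * of_int (-y)"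
    "\<i> * (of_int x + \<i> * of_int y) = of_int (-y) + \<i> * of_int x"
    "-\<i> * (of_int x + \<i> * of_int y) = of_int y + \<i> * of_int (-x)"
    by (simp_all add: complex_eq_iff)
  ultimately show ?thesis unfolding gauss_units_def by (metis insertCI)
qed

lemma primary_add_2_mult:
  assumes "primary w" "q \<in> gauss_ints"
  shows "primary (w + 2 * q) \<or> primary (- (w + 2 * q))"
proof -
  obtain x y :: int where w: "w = of_int x + \<i> * of_int y"
    using primary_in_gauss_ints[OF assms(1)] by (rule gauss_intsE)
  obtain s t :: int where q: "q = of_int s + \<i> * of_int t"
    using assms(2) by (rule gauss_intsE)
  have "even y" "(x + y) mod 4 = 1"
    using assms(1) by (simp_all add: w primary_gaussian_iff)
  then have odd: "odd (x + 2*s + (y + 2*t))" using mod_4_eq_1_imp_odd by fastforce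
  then have "primary (of_int (x + 2*s) + \<i> * of_int (y + 2*t))
      \<or> primary (of_int (-x - 2*s) + \<i> * of_int (-y - 2*t))"
    unfolding primary_gaussian_iff using odd_mod_4_cases[OF odd] \<open>even y\<close> by auto
  moreover have "w + 2 * q = of_int (x + 2*s) + \<i> * of_int (y + 2*t)"
    "- (w + 2 * q) = of_int (-x - 2*s) + \<i> * of_int (-y - 2*t)"
    by (simp_all add: w q complex_eq_iff)
  ultimately show ?thesis by simp
qed

fun mdet :: "imat \<Rightarrow> int" where
  "mdet (a, b, c, d) = a * d - b * c"

lemma SL2Z_iff_mdet: "\<gamma> \<in> SL2Z \<longleftrightarrow> mdet \<gamma> = 1"
  by (cases \<gamma>) (simp add: SL2Z_def)

lemma z2_gaussian: "z2 (a, b, c, d) = of_int (a - d) + \<i> * of_int (- (b + c))"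
  by (simp add: complex_eq_iff)

lemma z1_in_gauss_ints: "z1 \<gamma> \<in> gauss_ints"
  by (cases \<gamma>) (simp only: z1.simps gaussian_in_gauss_ints)

lemma z2_in_gauss_ints: "z2 \<gamma> \<in> gauss_ints"
  by (cases \<gamma>) (simp only: z2_gaussian gaussian_in_gauss_ints)

lemma gnorm_z1: "gnorm (z1 \<gamma>) = of_int (nuH \<gamma> + 2 * mdet \<gamma>)"
  by (cases \<gamma>) (simp only: z1.simps gnorm_gaussian, simp add: power2_eq_square algebra_simps)

lemma gnorm_z2: "gnorm (z2 \<gamma>) = of_int (nuH \<gamma> - 2 * mdet \<gamma>)"
  by (cases \<gamma>) (simp only: z2_gaussian gnorm_gaussian, simp add: power2_eq_square algebra_simps)

lemma z1_z2_inj: "inj (\<lambda>\<gamma>. (z1 \<gamma>, z2 \<gamma>))"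
proof (rule injI)
  fix \<gamma> \<gamma>' :: imat
  assume "(z1 \<gamma>, z2 \<gamma>) = (z1 \<gamma>', z2 \<gamma>')"
  then show "\<gamma> = \<gamma>'"
    by (cases \<gamma>; cases \<gamma>') (auto simp: complex_eq_iff)
qed

lemma z1_z2_surj:
  assumes "primary w\<^sub>1" "primary w\<^sub>2"
  shows "\<exists>\<gamma>. z1 \<gamma> = w\<^sub>1 \<and> z2 \<gamma> = w\<^sub>2"
proof -
  obtain x\<^sub>1 y\<^sub>1 :: int where w\<^sub>1: "w\<^sub>1 = of_int x\<^sub>1 + \<i> * of_int y\<^sub>1"
    using primary_in_gauss_ints[OF assms(1)] by (rule gauss_intsE)
  obtain x\<^sub>2 y\<^sub>2 :: int where w\<^sub>2: "w\<^sub>2 = of_int x\<^sub>2 + \<i> * of_int y\<^sub>2"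
    using primary_in_gauss_ints[OF assms(2)] by (rule gauss_intsE)
  \<comment> \<open>both are odd, so the halves below are integers\<close>
  have "even y\<^sub>1" "odd x\<^sub>1" "even y\<^sub>2" "odd x\<^sub>2"
    using assms mod_4_eq_1_imp_odd unfolding w\<^sub>1 w\<^sub>2 primary_gaussian_iff by fastforce+
  then obtain a b c d where
    "x\<^sub>1 + x\<^sub>2 = 2 * a" "y\<^sub>1 - y\<^sub>2 = 2 * b" "- y\<^sub>1 - y\<^sub>2 = 2 * c" "x\<^sub>1 - x\<^sub>2 = 2 * d"
    by (metis evenE odd_add even_diff even_minus)
  then have "z1 (a, b, c, d) = w\<^sub>1" "z2 (a, b, c, d) = w\<^sub>2"
    unfolding z1.simps z2_gaussian w\<^sub>1 w\<^sub>2 gaussian_eq_iff by auto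
  then show ?thesis by blast
qed

lemma Gamma_i_eq: "Gamma_i = {(1, 0, 0, 1), (0, 1, -1, 0), (-1, 0, 0, -1), (0, -1, 1, 0)}"
  (is "_ = ?G")
proof
  have "mpow gamma_i k \<in> ?G" for k
    by (induction k) (auto simp: mone_def gamma_i_def)
  then show "Gamma_i \<subseteq> ?G"
    unfolding Gamma_i_def by blast
  have "(1, 0, 0, 1) = mpow gamma_i 0" "(0, 1, -1, 0) = mpow gamma_i 1"
    "(-1, 0, 0, -1) = mpow gamma_i 2" "(0, -1, 1, 0) = mpow gamma_i 3"
    by (simp_all add: mone_def gamma_i_def numeral_eq_Suc)
  then show "?G \<subseteq> Gamma_i"
    unfolding Gamma_i_def by blast
qed

lemma dcoset_eq:
  "dcoset (a, b, c, d) = {(a, b, c, d), (-a, -b, -c, -d), (c, d, -a, -b), (-c, -d, a, b),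
     (-b, a, -d, c), (b, -a, d, -c), (-d, c, b, -a), (d, -c, -b, a)}"
  (is "_ = ?R")
proof
  show "dcoset (a, b, c, d) \<subseteq> ?R"
  proof
    fix \<rho> assume "\<rho> \<in> dcoset (a, b, c, d)"
    then obtain g h where "\<rho> = mmul (mmul g (a, b, c, d)) h" "g \<in> Gamma_i" "h \<in> Gamma_i"
      unfolding dcoset_def by blast
    then show "\<rho> \<in> ?R"
      unfolding Gamma_i_eq insert_iff empty_iff simp_thms by (elim disjE) simp_all
  qed
  have mem: "mmul (mmul g (a, b, c, d)) h \<in> dcoset (a, b, c, d)"
    if "g \<in> Gamma_i" "h \<in> Gamma_i" for g h
    using that unfolding dcoset_def by blast
  have G: "(1, 0, 0, 1) \<in> Gamma_i" "(0, 1, -1, 0) \<in> Gamma_i" "(-1, 0, 0, -1) \<in> Gamma_i"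
    "(0, -1, 1, 0) \<in> Gamma_i"
    unfolding Gamma_i_eq by simp_all
  show "?R \<subseteq> dcoset (a, b, c, d)"
    using mem[OF G(1) G(1)] mem[OF G(3) G(1)] mem[OF G(2) G(1)] mem[OF G(4) G(1)]
      mem[OF G(1) G(2)] mem[OF G(1) G(4)] mem[OF G(2) G(2)] mem[OF G(4) G(2)]
    by simp
qed

text \<open>Left multiplication by gamma_i multiplies both z1 and z2 by i; right multiplication
  multiplies them by i and -i respectively.\<close>
lemma dcoset_iff_z1_z2:
  "\<rho> \<in> dcoset \<gamma> \<longleftrightarrow>
    (\<exists>u \<in> gauss_units. \<exists>s \<in> {1, -1}. z1 \<rho> = u * z1 \<gamma> \<and> z2 \<rho> = s * u * z2 \<gamma>)"
proof -
  obtain a b c d where \<gamma>: "\<gamma> = (a, b, c, d)" by (cases \<gamma>)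
  define rot :: "(imat \<times> complex \<times> complex) list" where
    "rot = [((a, b, c, d), 1, 1), ((-a, -b, -c, -d), -1, 1), ((c, d, -a, -b), \<i>, 1),
      ((-c, -d, a, b), -\<i>, 1), ((-b, a, -d, c), \<i>, -1), ((b, -a, d, -c), -\<i>, -1),
      ((-d, c, b, -a), -1, -1), ((d, -c, -b, a), 1, -1)]"
  have z: "z1 \<rho>' = u * z1 \<gamma> \<and> z2 \<rho>' = s * u * z2 \<gamma>"
    if "(\<rho>', u, s) \<in> set rot" for \<rho>' u s
    using that unfolding rot_def \<gamma> by (auto simp: complex_eq_iff)
  have units: "u \<in> gauss_units \<and> s \<in> {1, -1}" if "(\<rho>', u, s) \<in> set rot" for \<rho>' u s
    using that unfolding rot_def gauss_units_def by (simp only: set_simps insert_iff) blast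
  have cover: "\<exists>\<rho>'. (\<rho>', u, s) \<in> set rot" if "u \<in> gauss_units" "s \<in> {1, -1}" for u s
    using that unfolding gauss_units_def insert_iff empty_iff simp_thms
    by (elim disjE; simp add: rot_def; blast)
  have "dcoset \<gamma> = fst ` set rot"
    unfolding rot_def \<gamma> dcoset_eq by simp
  show ?thesis
  proof
    assume "\<rho> \<in> dcoset \<gamma>"
    then obtain u s where "(\<rho>, u, s) \<in> set rot"
      using \<open>dcoset \<gamma> = fst ` set rot\<close> by force
    then show "\<exists>u \<in> gauss_units. \<exists>s \<in> {1, -1}. z1 \<rho> = u * z1 \<gamma> \<and> z2 \<rho> = s * u * z2 \<gamma>"
      using z units by blast
  next
    assume "\<exists>u \<in> gauss_units. \<exists>s \<in> {1, -1}. z1 \<rho> = u * z1 \<gamma> \<and> z2 \<rho> = s * u * z2 \<gamma>"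
    then obtain u s \<rho>' where
      "(\<rho>', u, s) \<in> set rot" "z1 \<rho> = u * z1 \<gamma>" "z2 \<rho> = s * u * z2 \<gamma>"
      using cover by blast
    with z have "\<rho> = \<rho>'"
      using injD[OF z1_z2_inj, of \<rho> \<rho>'] by simp
    then show "\<rho> \<in> dcoset \<gamma>"
      using \<open>(\<rho>', u, s) \<in> set rot\<close> \<open>dcoset \<gamma> = fst ` set rot\<close> by force
  qed
qed

lemma mdet_nuH_dcoset: "\<rho> \<in> dcoset \<gamma> \<Longrightarrow> mdet \<rho> = mdet \<gamma> \<and> nuH \<rho> = nuH \<gamma>"
  by (cases \<gamma>) (auto simp: dcoset_eq algebra_simps)

lemma z2_eq_z1_add_2_mult: "\<exists>q \<in> gauss_ints. z2 \<gamma> = z1 \<gamma> + 2 * q"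
proof (cases \<gamma>)
  case (fields a b c d)
  then have "z2 \<gamma> = z1 \<gamma> + 2 * (of_int (- d) + \<i> * of_int (- b))"
    by (simp add: complex_eq_iff)
  then show ?thesis using gaussian_in_gauss_ints by blast
qed

lemma dcoset_primary_exists:
  assumes "odd (nuH \<gamma>)"
  shows "\<exists>\<rho> \<in> dcoset \<gamma>. primary (z1 \<rho>) \<and> primary (z2 \<rho>)"
proof -
  obtain a b c d where \<gamma>: "\<gamma> = (a, b, c, d)" by (cases \<gamma>)
  have "odd (a + d + (b - c))" using assms by (simp add: \<gamma>) argo
  then obtain u where u: "u \<in> gauss_units" "primary (u * z1 \<gamma>)"
    unfolding \<gamma> z1.simps by (blast dest: primary_associate_exists)
  obtain q where "q \<in> gauss_ints" "z2 \<gamma> = z1 \<gamma> + 2 * q"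
    using z2_eq_z1_add_2_mult by blast
  then have "u * z2 \<gamma> = u * z1 \<gamma> + 2 * (u * q)" and "u * q \<in> gauss_ints"
    using u(1) gauss_units_subset gauss_ints_mult by (auto simp: algebra_simps)
  then have "primary (u * z2 \<gamma>) \<or> primary (-1 * u * z2 \<gamma>)"
    using primary_add_2_mult[OF u(2)] by simp
  then obtain s where "s \<in> {1, -1}" "primary (s * u * z2 \<gamma>)"
    by (metis insertCI mult_1)
  moreover obtain \<rho> where "z1 \<rho> = u * z1 \<gamma>" "z2 \<rho> = s * u * z2 \<gamma>"
    using z1_z2_surj[OF u(2) \<open>primary (s * u * z2 \<gamma>)\<close>] by blast
  ultimately show ?thesis
    using u dcoset_iff_z1_z2 by metis
qed

lemma dcoset_primary_unique:
  assumes "\<rho> \<in> dcoset \<gamma>" "primary (z1 \<rho>)" "primary (z2 \<rho>)"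
    and "\<rho>' \<in> dcoset \<gamma>" "primary (z1 \<rho>')" "primary (z2 \<rho>')"
  shows "\<rho> = \<rho>'"
proof -
  obtain u s where "u \<in> gauss_units" "s \<in> {1, -1}"
    and \<rho>: "z1 \<rho> = u * z1 \<gamma>" "z2 \<rho> = s * u * z2 \<gamma>"
    using assms(1) dcoset_iff_z1_z2 by blast
  obtain u' s' where "u' \<in> gauss_units" "s' \<in> {1, -1}"
    and \<rho>': "z1 \<rho>' = u' * z1 \<gamma>" "z2 \<rho>' = s' * u' * z2 \<gamma>"
    using assms(4) dcoset_iff_z1_z2 by blast
  have "s * u \<in> gauss_units" "s' * u' \<in> gauss_units"
    using \<open>u \<in> gauss_units\<close> \<open>s \<in> {1, -1}\<close> \<open>u' \<in> gauss_units\<close> \<open>s' \<in> {1, -1}\<close>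
    by (auto simp: gauss_units_def)
  then have "z2 \<rho> = z2 \<rho>'"
    unfolding \<rho> \<rho>' using assms(3,6) \<rho> \<rho>' by (intro primary_associate_unique) simp_all
  moreover have "z1 \<rho> = z1 \<rho>'"
    unfolding \<rho> \<rho>' using assms(2,5) \<rho> \<rho>' \<open>u \<in> gauss_units\<close> \<open>u' \<in> gauss_units\<close>
    by (intro primary_associate_unique) simp_all
  ultimately show ?thesis
    using injD[OF z1_z2_inj, of \<rho> \<rho>'] by simp
qed

definition primary_reps :: "int \<Rightarrow> imat set" where
  "primary_reps n = {\<gamma> \<in> SL2Z. nuH \<gamma> = n \<and> primary (z1 \<gamma>) \<and> primary (z2 \<gamma>)}"

lemma z1_z2_in_Cn_iff:
  assumes "\<gamma> \<in> SL2Z" "nuH \<gamma> = n"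
  shows "(z1 \<gamma>, z2 \<gamma>) \<in> Cn n \<longleftrightarrow> primary (z1 \<gamma>) \<and> primary (z2 \<gamma>)"
  using assms gnorm_z1[of \<gamma>] gnorm_z2[of \<gamma>] z1_in_gauss_ints z2_in_gauss_ints
  by (simp add: Cn_def SL2Z_iff_mdet)

lemma z1_z2_image_primary_reps: "(\<lambda>\<gamma>. (z1 \<gamma>, z2 \<gamma>)) ` primary_reps n = Cn n"
proof
  show "(\<lambda>\<gamma>. (z1 \<gamma>, z2 \<gamma>)) ` primary_reps n \<subseteq> Cn n"
    using z1_z2_in_Cn_iff by (auto simp: primary_reps_def)
  show "Cn n \<subseteq> (\<lambda>\<gamma>. (z1 \<gamma>, z2 \<gamma>)) ` primary_reps n"
  proof
    fix w assume "w \<in> Cn n"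
    then obtain w\<^sub>1 w\<^sub>2 where w: "w = (w\<^sub>1, w\<^sub>2)" "primary w\<^sub>1" "primary w\<^sub>2"
      "gnorm w\<^sub>1 = of_int (n + 2)" "gnorm w\<^sub>2 = of_int (n - 2)"
      by (cases w) (simp add: Cn_def)
    then obtain \<gamma> where \<gamma>: "z1 \<gamma> = w\<^sub>1" "z2 \<gamma> = w\<^sub>2"
      using z1_z2_surj by blast
    with w have "of_int (nuH \<gamma> + 2 * mdet \<gamma>) = (of_int (n + 2) :: complex)"
      "of_int (nuH \<gamma> - 2 * mdet \<gamma>) = (of_int (n - 2) :: complex)"
      by (simp_all only: gnorm_z1[symmetric] gnorm_z2[symmetric])
    then have "nuH \<gamma> + 2 * mdet \<gamma> = n + 2" "nuH \<gamma> - 2 * mdet \<gamma> = n - 2"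
      by (simp_all only: of_int_eq_iff)
    then have "\<gamma> \<in> primary_reps n"
      using w \<gamma> by (simp add: primary_reps_def SL2Z_iff_mdet)
    then show "w \<in> (\<lambda>\<gamma>. (z1 \<gamma>, z2 \<gamma>)) ` primary_reps n"
      by (rule image_eqI[rotated]) (simp add: w(1) \<gamma>)
  qed
qed

lemma primary_reps_unique:
  assumes "R \<subseteq> {\<gamma> \<in> SL2Z. nuH \<gamma> = n}" "(\<lambda>\<gamma>. (z1 \<gamma>, z2 \<gamma>)) ` R = Cn n"
  shows "R = primary_reps n"
proof -
  have iff: "\<gamma> \<in> R \<longleftrightarrow> \<gamma> \<in> primary_reps n" if "\<gamma> \<in> SL2Z" "nuH \<gamma> = n" for \<gamma>
  proof -
    have "\<gamma> \<in> R \<longleftrightarrow> (z1 \<gamma>, z2 \<gamma>) \<in> (\<lambda>\<gamma>. (z1 \<gamma>, z2 \<gamma>)) ` R"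
      by (rule inj_image_mem_iff[OF z1_z2_inj, symmetric])
    also have "\<dots> \<longleftrightarrow> primary (z1 \<gamma>) \<and> primary (z2 \<gamma>)"
      unfolding assms(2) using that by (rule z1_z2_in_Cn_iff)
    finally show ?thesis
      using that by (simp add: primary_reps_def)
  qed
  show ?thesis
  proof (intro equalityI subsetI)
    fix \<gamma> assume "\<gamma> \<in> R"
    with assms(1) iff show "\<gamma> \<in> primary_reps n" by blast
  next
    fix \<gamma> assume "\<gamma> \<in> primary_reps n"
    with iff show "\<gamma> \<in> R" by (simp add: primary_reps_def)
  qed
qed

lemma primary_reps_dcoset:
  assumes "odd n" "\<gamma> \<in> SL2Z" "nuH \<gamma> = n"
  shows "\<exists>!\<rho>. \<rho> \<in> primary_reps n \<and> \<rho> \<in> dcoset \<gamma>"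
proof -
  have reps_iff: "\<rho> \<in> primary_reps n \<longleftrightarrow> primary (z1 \<rho>) \<and> primary (z2 \<rho>)"
    if "\<rho> \<in> dcoset \<gamma>" for \<rho>
    using mdet_nuH_dcoset[OF that] assms(2,3) by (simp add: primary_reps_def SL2Z_iff_mdet)
  obtain \<rho> where "\<rho> \<in> dcoset \<gamma>" "primary (z1 \<rho>)" "primary (z2 \<rho>)"
    using dcoset_primary_exists assms(1,3) by blast
  then show ?thesis
    using reps_iff dcoset_primary_unique by (intro ex1I[of _ \<rho>]) blast+
qed

theorem lemma3p5:
  fixes n :: int
  assumes "n \<ge> 2" and "n mod 4 = 3"
  shows "\<exists>!R. R \<subseteq> {\<gamma> \<in> SL2Z. nuH \<gamma> = n}
           \<and> (\<forall>\<gamma> \<in> SL2Z. nuH \<gamma> = n \<longrightarrow> (\<exists>!\<rho>. \<rho> \<in> R \<and> \<rho> \<in> dcoset \<gamma>))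
           \<and> bij_betw (\<lambda>\<gamma>. (z1 \<gamma>, z2 \<gamma>)) R (Cn n)"
proof (rule ex1I[of _ "primary_reps n"], intro conjI)
  show "primary_reps n \<subseteq> {\<gamma> \<in> SL2Z. nuH \<gamma> = n}"
    by (auto simp: primary_reps_def)
  have "odd n" using assms(2) by presburger
  then show "\<forall>\<gamma> \<in> SL2Z. nuH \<gamma> = n \<longrightarrow> (\<exists>!\<rho>. \<rho> \<in> primary_reps n \<and> \<rho> \<in> dcoset \<gamma>)"
    by (simp add: primary_reps_dcoset)
  show "bij_betw (\<lambda>\<gamma>. (z1 \<gamma>, z2 \<gamma>)) (primary_reps n) (Cn n)"
    using inj_on_subset[OF z1_z2_inj subset_UNIV] z1_z2_image_primary_reps
    by (rule bij_betw_imageI)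
next
  fix R
  assume "R \<subseteq> {\<gamma> \<in> SL2Z. nuH \<gamma> = n}
      \<and> (\<forall>\<gamma> \<in> SL2Z. nuH \<gamma> = n \<longrightarrow> (\<exists>!\<rho>. \<rho> \<in> R \<and> \<rho> \<in> dcoset \<gamma>))
      \<and> bij_betw (\<lambda>\<gamma>. (z1 \<gamma>, z2 \<gamma>)) R (Cn n)"
  then show "R = primary_reps n"
    by (elim conjE) (intro primary_reps_unique bij_betw_imp_surj_on)
qed

end
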